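(* Let $\mathbf L=\{L_1,\dots,L_n\}$ be a finite multiset of positive rationals, $k\in\mathbb N_{>0}$, and let $(I,f_l,f_u)$ be an admissible restriction. Then $l^\star=\mathcal C(I,f_l,f_u)^{(k')}$, the $k'$-th largest element (with multiplicity) of $\mathcal C(I,f_l,f_u)$, where $k'=k-\sum_{i\in I}(f_l(i)-1)$.
   Context: $m(l)=\sum_{i=1}^n\lfloor L_i/l\rfloor$, $c(l)=\sum_i(\lceil L_i/l\rceil-1)$; $l$ feasible iff $m(l)\ge k$; $l^\star$ is the unique optimal cut length (feasible length minimizing $c$ among feasible lengths; equals the largest feasible length). Candidate multiset: $\mathcal C(I,f_l,f_u)=\biguplus_{i\in I}\{L_i/j: j\in\mathbb N,\ f_l(i)\le j\le f_u(i)\}$ (one occurrence per pair $(i,j)$). A triple $(I,f_l,f_u)$ with $I\subseteq[1..n]$, $f_l,f_u:I\to\mathbb N_{>0}$ is an admissible restriction if (i) for all $i\in I$, $f_l(i)=1$ or $L_i/(f_l(i)-1)$ is infeasible; (ii) for all $i\in I$, $L_i/f_u(i)$ is feasible; (iii) for all $i'\notin I$, $L_{i'}$ is feasible and $L_{i'}\ne l^\star$. $\mathbf A^{(r)}$ denotes the $r$-th largest element of multiset $\mathbf A$ counted with multiplicity. *)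

theory Defs
  imports Complex_Main "HOL-Library.Multiset"
begin

text \<open>Lengths are given as a function L on the index set {1..n}.\<close>

definition pieces :: "(nat \<Rightarrow> rat) \<Rightarrow> nat \<Rightarrow> rat \<Rightarrow> int" where
  "pieces L n l = (\<Sum>i\<in>{1..n}. \<lfloor>L i / l\<rfloor>)"

definition cuts :: "(nat \<Rightarrow> rat) \<Rightarrow> nat \<Rightarrow> rat \<Rightarrow> int" where
  "cuts L n l = (\<Sum>i\<in>{1..n}. \<lceil>L i / l\<rceil> - 1)"

definition feasible :: "(nat \<Rightarrow> rat) \<Rightarrow> nat \<Rightarrow> nat \<Rightarrow> rat \<Rightarrow> bool" where
  "feasible L n k l \<longleftrightarrow> l > 0 \<and> pieces L n l \<ge> int k"

definition optimal :: "(nat \<Rightarrow> rat) \<Rightarrow> nat \<Rightarrow> nat \<Rightarrow> rat \<Rightarrow> bool" where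
  "optimal L n k l \<longleftrightarrow> feasible L n k l \<and>
     (\<forall>l'. feasible L n k l' \<longrightarrow> cuts L n l \<le> cuts L n l')"

definition lstar :: "(nat \<Rightarrow> rat) \<Rightarrow> nat \<Rightarrow> nat \<Rightarrow> rat" where
  "lstar L n k = (THE l. optimal L n k l)"

definition candidates :: "(nat \<Rightarrow> rat) \<Rightarrow> nat set \<Rightarrow> (nat \<Rightarrow> nat) \<Rightarrow> (nat \<Rightarrow> nat) \<Rightarrow> rat multiset" where
  "candidates L I fl fu =
     (\<Sum>i\<in>I. image_mset (\<lambda>j. L i / of_nat j) (mset_set {fl i..fu i}))"

definition kth_largest :: "rat multiset \<Rightarrow> int \<Rightarrow> rat" where
  "kth_largest A r =
     (if 1 \<le> r \<and> r \<le> int (size A)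
      then rev (sorted_list_of_multiset A) ! (nat r - 1) else undefined)"

definition admissible :: "(nat \<Rightarrow> rat) \<Rightarrow> nat \<Rightarrow> nat \<Rightarrow> nat set \<Rightarrow> (nat \<Rightarrow> nat) \<Rightarrow> (nat \<Rightarrow> nat) \<Rightarrow> bool" where
  "admissible L n k I fl fu \<longleftrightarrow>
     I \<subseteq> {1..n} \<and>
     (\<forall>i\<in>I. fl i > 0 \<and> fu i > 0) \<and>
     (\<forall>i\<in>I. fl i = 1 \<or> \<not> feasible L n k (L i / of_nat (fl i - 1))) \<and>
     (\<forall>i\<in>I. feasible L n k (L i / of_nat (fu i))) \<and>
     (\<forall>i'\<in>{1..n} - I. feasible L n k (L i') \<and> L i' \<noteq> lstar L n k)"

end

theory Submission
  imports Defs
begin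

text \<open>The optimal length is the largest feasible length \<open>M\<close>. It exists because every feasible
  length can be rounded up to a feasible value \<open>L\<^sub>i / j\<close> with \<open>j \<le> k\<close>, and it satisfies
  \<open>c(M) < k \<le> m(M)\<close>, since otherwise a slightly longer length would still be feasible.
  For \<open>i \<in> I\<close> the candidates \<open>L\<^sub>i / j \<ge> M\<close> are those with \<open>j \<le> \<lfloor>L\<^sub>i / M\<rfloor>\<close>, and the candidates
  \<open>L\<^sub>i / j > M\<close> those with \<open>j \<le> \<lceil>L\<^sub>i / M\<rceil> - 1\<close>; admissibility puts both thresholds inside
  \<open>[f\<^sub>l(i) - 1, f\<^sub>u(i)]\<close>, and for \<open>i \<notin> I\<close> both vanish because \<open>L\<^sub>i < M\<close>. Hence fewer than
  \<open>k'\<close> candidates exceed \<open>M\<close> while at least \<open>k'\<close> are \<open>\<ge> M\<close>.\<close>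

lemma le_divide_of_int_iff_le_floor:
  fixes M x :: "'a::floor_ceiling"
  assumes "0 < M" "0 < j"
  shows "M \<le> x / of_int j \<longleftrightarrow> j \<le> \<lfloor>x / M\<rfloor>"
  using assms by (simp add: le_floor_iff pos_le_divide_eq mult.commute)

lemma less_divide_of_int_iff_less_ceiling:
  fixes M x :: "'a::floor_ceiling"
  assumes "0 < M" "0 < j"
  shows "M < x / of_int j \<longleftrightarrow> j < \<lceil>x / M\<rceil>"
  using assms by (simp add: less_ceiling_iff pos_less_divide_eq mult.commute)

lemma floor_less_ceiling_of_less:
  fixes x y :: "'a::floor_ceiling"
  assumes "x < y"
  shows "\<lfloor>x\<rfloor> < \<lceil>y\<rceil>"
  unfolding less_ceiling_iff using of_int_floor_le assms by (rule order.strict_trans1)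

lemma sum_min_ge:
  fixes q :: "'a \<Rightarrow> int"
  assumes "finite A" "0 \<le> k" "\<And>i. i \<in> A \<Longrightarrow> 0 \<le> q i" "k \<le> (\<Sum>i\<in>A. q i)"
  shows "k \<le> (\<Sum>i\<in>A. min (q i) k)"
proof (cases "\<exists>i\<in>A. k \<le> q i")
  case True
  then obtain i where "i \<in> A" "k \<le> q i" by blast
  then have "min (q i) k \<le> (\<Sum>i\<in>A. min (q i) k)"
    using assms by (intro member_le_sum) auto
  with \<open>k \<le> q i\<close> show ?thesis by simp
next
  case False
  then have "(\<Sum>i\<in>A. min (q i) k) = (\<Sum>i\<in>A. q i)"
    by (intro sum.cong) (auto simp: not_le)
  then show ?thesis using assms(4) by simp
qed

lemma card_interval_le:
  fixes a b :: nat and m :: int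
  assumes "1 \<le> a" "int a - 1 \<le> m" "m \<le> int b"
  shows "int (card {j \<in> {a..b}. int j \<le> m}) = m - (int a - 1)"
proof -
  have "{j \<in> {a..b}. int j \<le> m} = {a..nat m}" using assms by auto
  then show ?thesis using assms by simp
qed

lemma card_interval_divide:
  fixes x M :: "'a::floor_ceiling" and a b :: nat
  assumes "0 < M" "1 \<le> a" "of_nat a - 1 < x / M" "x / M \<le> of_nat b"
  shows "int (card {j \<in> {a..b}. M \<le> x / of_nat j}) = \<lfloor>x / M\<rfloor> - (int a - 1)"
    and "int (card {j \<in> {a..b}. M < x / of_nat j}) = (\<lceil>x / M\<rceil> - 1) - (int a - 1)"
proof -
  have lower: "int a - 1 \<le> \<lfloor>x / M\<rfloor>" "int a - 1 \<le> \<lceil>x / M\<rceil> - 1"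
    using assms(3) by (simp_all add: le_floor_iff less_ceiling_iff)
  have "\<lceil>x / M\<rceil> \<le> int b" using assms(4) by (simp add: ceiling_le_iff)
  then have upper: "\<lfloor>x / M\<rfloor> \<le> int b" "\<lceil>x / M\<rceil> - 1 \<le> int b"
    using floor_le_ceiling[of "x / M"] by linarith+
  have "{j \<in> {a..b}. M \<le> x / of_nat j} = {j \<in> {a..b}. int j \<le> \<lfloor>x / M\<rfloor>}"
    using assms(2) le_divide_of_int_iff_le_floor[OF assms(1), of "int j" x for j] by auto
  then show "int (card {j \<in> {a..b}. M \<le> x / of_nat j}) = \<lfloor>x / M\<rfloor> - (int a - 1)"
    using card_interval_le[OF assms(2) lower(1) upper(1)] by simp
  have "{j \<in> {a..b}. M < x / of_nat j} = {j \<in> {a..b}. int j \<le> \<lceil>x / M\<rceil> - 1}"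
    using assms(2) less_divide_of_int_iff_less_ceiling[OF assms(1), of "int j" x for j] by auto
  then show "int (card {j \<in> {a..b}. M < x / of_nat j}) = (\<lceil>x / M\<rceil> - 1) - (int a - 1)"
    using card_interval_le[OF assms(2) lower(2) upper(2)] by presburger
qed

lemma sorted_nth_eqI:
  fixes xs :: "'a::linorder list"
  assumes s: "sorted xs" and lo: "length (filter (\<lambda>y. y < x) xs) \<le> i"
    and hi: "i + length (filter (\<lambda>y. x < y) xs) < length xs"
  shows "xs ! i = x"
proof (rule ccontr)
  assume "xs ! i \<noteq> x"
  have i: "i < length xs" using hi by simp
  have length_filter_split: "length (filter P xs) =
      length (filter P (take m xs)) + length (filter P (drop m xs))" for P m
    by (metis append_take_drop_id filter_append length_append)
  consider "xs ! i < x" | "x < xs ! i" using \<open>xs ! i \<noteq> x\<close> neq_iff by blast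
  then show False
  proof cases
    case 1
    have "y < x" if y: "y \<in> set (take (Suc i) xs)" for y
    proof -
      obtain j where "j < length (take (Suc i) xs)" "y = take (Suc i) xs ! j"
        using y by (auto simp: in_set_conv_nth)
      then have "j \<le> i" "y = xs ! j" by auto
      then have "y \<le> xs ! i" using sorted_nth_mono[OF s _ i] by blast
      then show ?thesis using 1 by simp
    qed
    then have "length (filter (\<lambda>y. y < x) (take (Suc i) xs)) = Suc i" using i by simp
    then have "Suc i \<le> length (filter (\<lambda>y. y < x) xs)"
      using length_filter_split[of "\<lambda>y. y < x" "Suc i"] by linarith
    then show False using lo by simp
  next
    case 2
    have "x < y" if y: "y \<in> set (drop i xs)" for y
    proof -
      obtain j where "j < length (drop i xs)" "y = drop i xs ! j"
        using y by (auto simp: in_set_conv_nth)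
      then have "i + j < length xs" "y = xs ! (i + j)" by auto
      then have "xs ! i \<le> y" using sorted_nth_mono[OF s, of i "i + j"] by simp
      then show ?thesis using 2 by simp
    qed
    then have "length (filter (\<lambda>y. x < y) (drop i xs)) = length xs - i" by simp
    then have "length xs - i \<le> length (filter (\<lambda>y. x < y) xs)"
      using length_filter_split[of "\<lambda>y. x < y" i] by linarith
    then show False using hi by linarith
  qed
qed

lemma kth_largest_eqI:
  assumes lo: "int (size (filter_mset (\<lambda>y. x < y) A)) < r"
    and hi: "r \<le> int (size (filter_mset (\<lambda>y. x \<le> y) A))"
  shows "kth_largest A r = x"
proof -
  define xs where "xs = sorted_list_of_multiset A"
  have A: "A = mset xs" by (simp add: xs_def)
  have size_filter: "size (filter_mset P A) = length (filter P xs)" for P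
    unfolding A by (metis mset_filter size_mset)
  have compl: "length (filter (\<lambda>y. x \<le> y) xs) + length (filter (\<lambda>y. y < x) xs) = length xs"
    using sum_length_filter_compl[of "\<lambda>y. x \<le> y" xs] by (simp add: not_le)
  then have "r \<le> int (length xs)" using hi size_filter[of "\<lambda>y. x \<le> y"] by linarith
  moreover have "1 \<le> r" using lo by simp
  ultimately obtain m where m: "r = int m" "1 \<le> m" "m \<le> length xs"
    by (intro that[of "nat r"]) auto
  have "rev xs ! (m - 1) = xs ! (length xs - m)"
    using m by (simp add: rev_nth Suc_diff_le)
  also have "\<dots> = x"
  proof (rule sorted_nth_eqI)
    show "sorted xs" by (simp add: xs_def)
    show "length (filter (\<lambda>y. y < x) xs) \<le> length xs - m"
      using compl hi size_filter[of "\<lambda>y. x \<le> y"] m by linarith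
    show "length xs - m + length (filter (\<lambda>y. x < y) xs) < length xs"
      using lo size_filter[of "\<lambda>y. x < y"] m by linarith
  qed
  moreover have "size A = length xs" by (simp add: A)
  ultimately show ?thesis unfolding kth_largest_def using m by (simp add: xs_def)
qed

lemma size_filter_candidates:
  assumes "finite I"
  shows "size (filter_mset P (candidates L I fl fu)) =
    (\<Sum>i\<in>I. card {j \<in> {fl i..fu i}. P (L i / of_nat j)})"
  unfolding candidates_def using assms
  by (induction I rule: finite_induct) (simp_all add: filter_mset_image_mset filter_mset_mset_set)

lemma pieces_antimono:
  assumes pos: "\<And>i. i \<in> {1..n} \<Longrightarrow> 0 < L i" and "0 < l" "l \<le> l'"
  shows "pieces L n l' \<le> pieces L n l"
  unfolding pieces_def
proof (rule sum_mono)
  fix i assume "i \<in> {1..n}"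
  then have "0 \<le> L i" using pos less_imp_le by blast
  with assms(2,3) have "L i / l' \<le> L i / l" by (intro divide_left_mono) auto
  then show "\<lfloor>L i / l'\<rfloor> \<le> \<lfloor>L i / l\<rfloor>" by (rule floor_mono)
qed

lemma cuts_antimono:
  assumes pos: "\<And>i. i \<in> {1..n} \<Longrightarrow> 0 < L i" and "0 < l" "l \<le> l'"
  shows "cuts L n l' \<le> cuts L n l"
  unfolding cuts_def
proof (rule sum_mono)
  fix i assume "i \<in> {1..n}"
  then have "0 \<le> L i" using pos less_imp_le by blast
  with assms(2,3) have "L i / l' \<le> L i / l" by (intro divide_left_mono) auto
  then have "\<lceil>L i / l'\<rceil> \<le> \<lceil>L i / l\<rceil>" by (rule ceiling_mono)
  then show "\<lceil>L i / l'\<rceil> - 1 \<le> \<lceil>L i / l\<rceil> - 1" by simp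
qed

lemma feasible_antimono:
  assumes pos: "\<And>i. i \<in> {1..n} \<Longrightarrow> 0 < L i" and "feasible L n k l'" "0 < l" "l \<le> l'"
  shows "feasible L n k l"
  using pieces_antimono[where L=L and n=n, OF pos assms(3,4)] assms(2,3)
  by (auto simp: feasible_def)

lemma feasible_le_feasible_candidate:
  assumes pos: "\<And>i. i \<in> {1..n} \<Longrightarrow> 0 < L i" and "k > 0" and feas: "feasible L n k l"
  obtains i j where "i \<in> {1..n}" "j \<in> {1..int k}" "feasible L n k (L i / of_int j)"
    "l \<le> L i / of_int j"
proof -
  have l0: "0 < l" using feas by (simp add: feasible_def)
  define q where "q i = \<lfloor>L i / l\<rfloor>" for i
  define d where "d i = min (q i) (int k)" for i
  define S where "S = {i\<in>{1..n}. 1 \<le> q i}"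
  have q0: "0 \<le> q i" if "i \<in> {1..n}" for i using pos[OF that] l0 by (simp add: q_def)
  txt \<open>Rounding \<open>l\<close> up to the least \<open>L\<^sub>i / d\<^sub>i\<close> keeps \<open>d\<^sub>i\<close> pieces from each \<open>L\<^sub>i\<close>.\<close>
  have "int k \<le> (\<Sum>i\<in>{1..n}. d i)"
    unfolding d_def using feas q0 by (intro sum_min_ge) (auto simp: feasible_def pieces_def q_def)
  have "S \<noteq> {}"
  proof
    assume "S = {}"
    then have "d i \<le> 0" if "i \<in> {1..n}" for i using that by (auto simp: S_def d_def)
    then have "(\<Sum>i\<in>{1..n}. d i) \<le> 0" by (rule sum_nonpos)
    with \<open>int k \<le> _\<close> \<open>k > 0\<close> show False by simp
  qed
  have d_range: "d i \<in> {1..int k}" if "i \<in> S" for i using that \<open>k > 0\<close> by (auto simp: S_def d_def)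
  define c where "c = Min ((\<lambda>i. L i / of_int (d i)) ` S)"
  have "finite S" by (simp add: S_def)
  then have "c \<in> (\<lambda>i. L i / of_int (d i)) ` S" unfolding c_def using \<open>S \<noteq> {}\<close> by simp
  then obtain i0 where i0: "i0 \<in> S" "c = L i0 / of_int (d i0)" by blast
  have c_le: "c \<le> L i / of_int (d i)" if "i \<in> S" for i
    using that \<open>finite S\<close> by (simp add: c_def)
  have "l \<le> L i / of_int (d i)" if "i \<in> S" for i
    using le_divide_of_int_iff_le_floor[OF l0] d_range[OF that] by (simp add: d_def q_def)
  then have "l \<le> c" using i0 by simp
  then have c0: "0 < c" using l0 by simp
  have "d i \<le> \<lfloor>L i / c\<rfloor>" if "i \<in> {1..n}" for i
  proof (cases "i \<in> S")
    case True
    have "0 < d i" using d_range[OF True] by simp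
    with True c_le show ?thesis using le_divide_of_int_iff_le_floor[OF c0] by blast
  next
    case False
    then have "d i \<le> 0" using that by (simp add: S_def d_def)
    also have "0 \<le> \<lfloor>L i / c\<rfloor>" using pos[OF that] c0 by simp
    finally show ?thesis .
  qed
  then have "(\<Sum>i\<in>{1..n}. d i) \<le> pieces L n c" unfolding pieces_def by (rule sum_mono)
  with \<open>int k \<le> _\<close> c0 have "feasible L n k c" by (simp add: feasible_def)
  with i0 d_range \<open>l \<le> c\<close> show ?thesis by (intro that[of i0 "d i0"]) (auto simp: S_def)
qed

definition max_feasible :: "(nat \<Rightarrow> rat) \<Rightarrow> nat \<Rightarrow> nat \<Rightarrow> rat \<Rightarrow> bool" where
  "max_feasible L n k M \<longleftrightarrow> feasible L n k M \<and> (\<forall>l. feasible L n k l \<longrightarrow> l \<le> M)"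

lemma max_feasible_exists:
  assumes "n \<ge> 1" and pos: "\<And>i. i \<in> {1..n} \<Longrightarrow> 0 < L i" and "k > 0"
  obtains M where "max_feasible L n k M"
proof -
  define F where
    "F = {c \<in> (\<lambda>(i, j). L i / of_int j) ` ({1..n} \<times> {1..int k}). feasible L n k c}"
  have "finite F" by (simp add: F_def)
  have L1: "0 < L 1" using pos \<open>n \<ge> 1\<close> by simp
  have "int k = \<lfloor>L 1 / (L 1 / of_nat k)\<rfloor>" using L1 \<open>k > 0\<close> by simp
  also have "\<dots> \<le> pieces L n (L 1 / of_nat k)" unfolding pieces_def
    using \<open>n \<ge> 1\<close> pos L1 \<open>k > 0\<close> by (intro member_le_sum) (auto intro: less_imp_le)
  finally have "feasible L n k (L 1 / of_nat k)" using L1 \<open>k > 0\<close> by (simp add: feasible_def)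
  then obtain c where "c \<in> F"
    using feasible_le_feasible_candidate[where L=L and n=n, OF pos \<open>k > 0\<close>] by (fastforce simp: F_def)
  then have "F \<noteq> {}" by blast
  have "l \<le> Max F" if feas: "feasible L n k l" for l
  proof -
    obtain i j where "i \<in> {1..n}" "j \<in> {1..int k}" "feasible L n k (L i / of_int j)"
      "l \<le> L i / of_int j"
      using feasible_le_feasible_candidate[where L=L and n=n, OF pos \<open>k > 0\<close> feas] by blast
    moreover from this have "L i / of_int j \<le> Max F"
      using \<open>finite F\<close> by (intro Max_ge) (auto simp: F_def)
    ultimately show ?thesis by simp
  qed
  moreover have "feasible L n k (Max F)" using Max_in[OF \<open>finite F\<close> \<open>F \<noteq> {}\<close>] by (simp add: F_def)
  ultimately show ?thesis by (intro that[of "Max F"]) (simp add: max_feasible_def)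
qed

lemma cuts_max_feasible_less:
  assumes "n \<ge> 1" and pos: "\<And>i. i \<in> {1..n} \<Longrightarrow> 0 < L i" and max: "max_feasible L n k M"
  shows "cuts L n M < int k"
proof (rule ccontr)
  assume "\<not> cuts L n M < int k"
  have M0: "0 < M" using max by (simp add: max_feasible_def feasible_def)
  txt \<open>Each \<open>L\<^sub>i\<close> still yields \<open>\<lceil>L\<^sub>i / M\<rceil> - 1\<close> pieces of the length \<open>l > M\<close> chosen below.\<close>
  define e where "e i = \<lceil>L i / M\<rceil> - 1" for i
  define g where "g i = (if 1 \<le> e i then L i / of_int (e i) else M + 1)" for i
  define l where "l = Min (g ` {1..n})"
  have "M < g i" for i
  proof (cases "1 \<le> e i")
    case True
    moreover have "e i < \<lceil>L i / M\<rceil>" by (simp add: e_def)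
    ultimately show ?thesis
      using less_divide_of_int_iff_less_ceiling[OF M0, of "e i" "L i"] by (simp add: g_def)
  qed (simp add: g_def)
  moreover have "l \<in> g ` {1..n}" unfolding l_def using \<open>n \<ge> 1\<close> by (intro Min_in) auto
  ultimately have "M < l" by auto
  have "e i \<le> \<lfloor>L i / l\<rfloor>" if "i \<in> {1..n}" for i
  proof (cases "1 \<le> e i")
    case True
    have "l \<le> g i" unfolding l_def using that by (intro Min_le) auto
    with True show ?thesis using le_divide_of_int_iff_le_floor[of l "e i"] \<open>M < l\<close> M0 by (simp add: g_def)
  next
    case False
    moreover have "0 \<le> \<lfloor>L i / l\<rfloor>" using pos[OF that] \<open>M < l\<close> M0 by simp
    ultimately show ?thesis by linarith
  qed
  then have "cuts L n M \<le> pieces L n l" unfolding cuts_def pieces_def e_def[symmetric]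
    by (rule sum_mono)
  with \<open>\<not> cuts L n M < int k\<close> \<open>M < l\<close> M0 have "feasible L n k l" by (simp add: feasible_def)
  with max \<open>M < l\<close> show False by (auto simp: max_feasible_def)
qed

lemma lstar_eq_max_feasible:
  assumes "n \<ge> 1" and pos: "\<And>i. i \<in> {1..n} \<Longrightarrow> 0 < L i" and max: "max_feasible L n k M"
  shows "lstar L n k = M"
  unfolding lstar_def
proof (rule the_equality)
  show "optimal L n k M"
    using max cuts_antimono[where L=L and n=n, OF pos]
    by (auto simp: optimal_def max_feasible_def feasible_def)
next
  fix l assume opt: "optimal L n k l"
  show "l = M"
  proof (rule ccontr)
    assume "l \<noteq> M"
    with opt max have "0 < l" "l < M" by (auto simp: optimal_def max_feasible_def feasible_def)
    have "pieces L n M \<le> cuts L n l" unfolding cuts_def pieces_def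
    proof (rule sum_mono)
      fix i assume "i \<in> {1..n}"
      with pos \<open>0 < l\<close> \<open>l < M\<close> have "L i / M < L i / l" by (intro divide_strict_left_mono) auto
      then show "\<lfloor>L i / M\<rfloor> \<le> \<lceil>L i / l\<rceil> - 1" using floor_less_ceiling_of_less by fastforce
    qed
    moreover have "cuts L n l \<le> cuts L n M" using opt max by (simp add: optimal_def max_feasible_def)
    ultimately show False
      using cuts_max_feasible_less[OF \<open>n \<ge> 1\<close> pos max] max by (simp add: max_feasible_def feasible_def)
  qed
qed

lemma admissible_index_bounds:
  assumes pos: "\<And>i. i \<in> {1..n} \<Longrightarrow> 0 < L i" and adm: "admissible L n k I fl fu"
    and max: "max_feasible L n k M" and "i \<in> I"
  shows "of_nat (fl i) - 1 < L i / M" and "L i / M \<le> of_nat (fu i)"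
proof -
  have M0: "0 < M" using max by (simp add: max_feasible_def feasible_def)
  have Li: "0 < L i" using pos adm \<open>i \<in> I\<close> by (auto simp: admissible_def)
  show "of_nat (fl i) - 1 < L i / M"
  proof (cases "fl i = 1")
    case True
    then show ?thesis using Li M0 by simp
  next
    case False
    then have "2 \<le> fl i" using adm \<open>i \<in> I\<close> by (auto simp: admissible_def)
    then have "0 < L i / of_nat (fl i - 1)" using Li by simp
    moreover have "\<not> feasible L n k (L i / of_nat (fl i - 1))"
      using adm \<open>i \<in> I\<close> False by (auto simp: admissible_def)
    ultimately have "M < L i / of_nat (fl i - 1)"
      using max feasible_antimono[where L=L and n=n, OF pos] unfolding max_feasible_def
      by (meson not_less)
    then have "M * of_nat (fl i - 1) < L i" using \<open>2 \<le> fl i\<close> by (simp add: pos_less_divide_eq)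
    then have "of_nat (fl i - 1) < L i / M" using M0 by (simp add: pos_less_divide_eq mult.commute)
    then show ?thesis using \<open>2 \<le> fl i\<close> by (simp add: of_nat_diff)
  qed
  have "0 < fu i" "feasible L n k (L i / of_nat (fu i))"
    using adm \<open>i \<in> I\<close> by (auto simp: admissible_def)
  then have "L i / of_nat (fu i) \<le> M" using max by (simp add: max_feasible_def)
  then have "L i \<le> M * of_nat (fu i)" using \<open>0 < fu i\<close> by (simp add: pos_divide_le_eq)
  then show "L i / M \<le> of_nat (fu i)" using M0 by (simp add: pos_divide_le_eq mult.commute)
qed

lemma admissible_outside_index:
  assumes "n \<ge> 1" and pos: "\<And>i. i \<in> {1..n} \<Longrightarrow> 0 < L i" and adm: "admissible L n k I fl fu"
    and max: "max_feasible L n k M" and i: "i \<in> {1..n} - I"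
  shows "\<lfloor>L i / M\<rfloor> = 0" and "\<lceil>L i / M\<rceil> - 1 = 0"
proof -
  have M0: "0 < M" using max by (simp add: max_feasible_def feasible_def)
  have "L i \<le> M" "L i \<noteq> M"
    using adm max i lstar_eq_max_feasible[OF \<open>n \<ge> 1\<close> pos max]
    by (auto simp: admissible_def max_feasible_def)
  then have "L i / M < 1" using M0 by simp
  moreover have "0 < L i / M" using pos i M0 by simp
  ultimately show "\<lfloor>L i / M\<rfloor> = 0" "\<lceil>L i / M\<rceil> - 1 = 0"
    by (simp_all add: floor_eq_iff ceiling_eq_iff)
qed

lemma size_candidates_max_feasible:
  assumes "n \<ge> 1" and pos: "\<And>i. i \<in> {1..n} \<Longrightarrow> 0 < L i" and adm: "admissible L n k I fl fu"
    and max: "max_feasible L n k M"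
  shows "int (size (filter_mset (\<lambda>y. M \<le> y) (candidates L I fl fu))) =
      pieces L n M - (\<Sum>i\<in>I. int (fl i) - 1)"
    and "int (size (filter_mset (\<lambda>y. M < y) (candidates L I fl fu))) =
      cuts L n M - (\<Sum>i\<in>I. int (fl i) - 1)"
proof -
  have "I \<subseteq> {1..n}" and fl: "\<And>i. i \<in> I \<Longrightarrow> 1 \<le> fl i"
    using adm by (auto simp: admissible_def)
  then have "finite I" using finite_subset by blast
  have M0: "0 < M" using max by (simp add: max_feasible_def feasible_def)
  note bounds = admissible_index_bounds[where L=L and n=n, OF pos adm max]
  note outside = admissible_outside_index[where L=L and n=n, OF \<open>n \<ge> 1\<close> pos adm max]
  have "pieces L n M = (\<Sum>i\<in>I. \<lfloor>L i / M\<rfloor>)"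
    unfolding pieces_def using \<open>I \<subseteq> {1..n}\<close> outside(1) by (intro sum.mono_neutral_right) auto
  moreover have "cuts L n M = (\<Sum>i\<in>I. \<lceil>L i / M\<rceil> - 1)"
    unfolding cuts_def using \<open>I \<subseteq> {1..n}\<close> outside(2) by (intro sum.mono_neutral_right) auto
  moreover have
    "int (card {j \<in> {fl i..fu i}. M \<le> L i / of_nat j}) = \<lfloor>L i / M\<rfloor> - (int (fl i) - 1)"
    "int (card {j \<in> {fl i..fu i}. M < L i / of_nat j}) = (\<lceil>L i / M\<rceil> - 1) - (int (fl i) - 1)"
    if "i \<in> I" for i
    using card_interval_divide[OF M0 fl bounds] that by auto
  ultimately show
    "int (size (filter_mset (\<lambda>y. M \<le> y) (candidates L I fl fu))) =
      pieces L n M - (\<Sum>i\<in>I. int (fl i) - 1)"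
    "int (size (filter_mset (\<lambda>y. M < y) (candidates L I fl fu))) =
      cuts L n M - (\<Sum>i\<in>I. int (fl i) - 1)"
    by (simp_all add: size_filter_candidates[OF \<open>finite I\<close>] sum_subtractf)
qed

theorem mainTheorem10:
  fixes L :: "nat \<Rightarrow> rat" and n k :: nat and I :: "nat set" and fl fu :: "nat \<Rightarrow> nat"
  assumes "n \<ge> 1"
    and "\<forall>i\<in>{1..n}. L i > 0"
    and "k > 0"
    and "admissible L n k I fl fu"
  shows "lstar L n k =
           kth_largest (candidates L I fl fu) (int k - (\<Sum>i\<in>I. (int (fl i) - 1)))"
proof -
  have pos: "\<And>i. i \<in> {1..n} \<Longrightarrow> 0 < L i" using assms(2) by blast
  obtain M where max: "max_feasible L n k M"
    using max_feasible_exists[where L=L and n=n, OF \<open>n \<ge> 1\<close> pos \<open>k > 0\<close>] .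
  have "int k \<le> pieces L n M" using max by (simp add: max_feasible_def feasible_def)
  moreover have "cuts L n M < int k" using cuts_max_feasible_less[OF \<open>n \<ge> 1\<close> pos max] .
  ultimately have "kth_largest (candidates L I fl fu) (int k - (\<Sum>i\<in>I. (int (fl i) - 1))) = M"
    using size_candidates_max_feasible[OF \<open>n \<ge> 1\<close> pos assms(4) max]
    by (intro kth_largest_eqI) simp_all
  then show ?thesis using lstar_eq_max_feasible[OF \<open>n \<ge> 1\<close> pos max] by simp
qed

end
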